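(* Under any feasible prescription strategy, the local state $X_t^1$ and the local mode $M_t^1$ are conditionally independent given the common information $H_t^0$.
   Context: Two-plant switched linear system $X_{t+1}=A(M_t^{0:1})X_t+B(M_t^{0:1})U_t+W_t$, $t=0,\dots,T$, with global/local states $X_t^0,X_t^1$, global/local modes $M_t^0,M_t^1$ (finite sets), actions $U_t^0,U_t^1$; the random variables $X_0^n$, $W_t^n$, $M_t^n$ ($n=0,1$, all $t$) are mutually independent (in particular the modes are independent over time and of each other). Packet-drop indicator $\Gamma_t$ i.i.d. Bernoulli, independent of everything else; $Z_t=X_t^1$, $\tilde Z_t=M_t^1$ if $\Gamma_t=1$ and $Z_t=\tilde Z_t=\emptyset$ if $\Gamma_t=0$. Common information $H_t^0=\{X_{0:t}^0,M_{0:t}^0,Z_{0:t},\tilde Z_{0:t},U_{0:t-1}^0\}$. A feasible prescription strategy chooses, as functions of $H_t^0$, the global action $U_t^0$ and a measurable map $\rho_t$ with $U_t^1=\rho_t(X_t^1,M_t^1)$, such that all states and actions have finite second moments. *)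

theory Defs
  imports "HOL-Probability.Probability"
begin

definition stack :: "'a ^ 'n0 \<Rightarrow> 'a ^ 'n1 \<Rightarrow> 'a ^ ('n0 + 'n1)" where
  "stack x0 x1 = (\<chi> i. case i of Inl a \<Rightarrow> x0 $ a | Inr b \<Rightarrow> x1 $ b)"

definition gen_sets :: "'w measure \<Rightarrow> ('w \<Rightarrow> 'b) \<Rightarrow> 'b measure \<Rightarrow> 'w set set" where
  "gen_sets M f N = {f -` A \<inter> space M | A. A \<in> sets N}"

definition option_measure :: "'b measure \<Rightarrow> 'b option measure" where
  "option_measure N = sigma UNIV (insert {None} ((\<lambda>B. Some ` B) ` sets N))"

(* Packet-drop channel output: Z = value if Gamma, otherwise empty symbol *)
definition chan :: "('w \<Rightarrow> bool) \<Rightarrow> ('w \<Rightarrow> 'b) \<Rightarrow> 'w \<Rightarrow> 'b option" where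
  "chan G Y = (\<lambda>\<omega>. if G \<omega> then Some (Y \<omega>) else None)"

(* Common information H_t^0 = {X^0_{0:t}, M^0_{0:t}, Z_{0:t}, Ztilde_{0:t}, U^0_{0:t-1}}
   as the sigma-algebra on the sample space generated by these random variables. *)
definition common_info ::
  "'w measure \<Rightarrow> (nat \<Rightarrow> 'w \<Rightarrow> real ^ 'n0) \<Rightarrow> (nat \<Rightarrow> 'w \<Rightarrow> 'm0)
   \<Rightarrow> (nat \<Rightarrow> 'w \<Rightarrow> real ^ 'n1) \<Rightarrow> (nat \<Rightarrow> 'w \<Rightarrow> 'm1) \<Rightarrow> (nat \<Rightarrow> 'w \<Rightarrow> bool)
   \<Rightarrow> (nat \<Rightarrow> 'w \<Rightarrow> real ^ 'k0) \<Rightarrow> nat \<Rightarrow> 'w measure" where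
  "common_info M Xg Mg Xl Ml G Ug t = sigma (space M)
     ((\<Union>s\<in>{..t}. gen_sets M (Xg s) borel)
      \<union> (\<Union>s\<in>{..t}. gen_sets M (Mg s) (count_space UNIV))
      \<union> (\<Union>s\<in>{..t}. gen_sets M (chan (G s) (Xl s)) (option_measure borel))
      \<union> (\<Union>s\<in>{..t}. gen_sets M (chan (G s) (Ml s)) (option_measure (count_space UNIV)))
      \<union> (\<Union>s\<in>{..<t}. gen_sets M (Ug s) borel))"

definition cond_indep ::
  "'w measure \<Rightarrow> 'w measure \<Rightarrow> ('w \<Rightarrow> 'b) \<Rightarrow> 'b measure \<Rightarrow> ('w \<Rightarrow> 'c) \<Rightarrow> 'c measure \<Rightarrow> bool" where
  "cond_indep M F Y N1 V N2 \<longleftrightarrow>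
     (\<forall>A\<in>sets N1. \<forall>B\<in>sets N2.
        AE \<omega> in M. real_cond_exp M F (indicator ({w\<in>space M. Y w \<in> A \<and> V w \<in> B})) \<omega>
          = real_cond_exp M F (indicator ({w\<in>space M. Y w \<in> A})) \<omega>
            * real_cond_exp M F (indicator ({w\<in>space M. V w \<in> B})) \<omega>)"

datatype prim_label = LX0g | LX0l | LW0 nat | LW1 nat | LM0 nat | LM1 nat | LGam nat

definition prim_events ::
  "'w measure \<Rightarrow> ('w \<Rightarrow> real ^ 'n0) \<Rightarrow> ('w \<Rightarrow> real ^ 'n1)
   \<Rightarrow> (nat \<Rightarrow> 'w \<Rightarrow> real ^ 'n0) \<Rightarrow> (nat \<Rightarrow> 'w \<Rightarrow> real ^ 'n1)
   \<Rightarrow> (nat \<Rightarrow> 'w \<Rightarrow> 'm0) \<Rightarrow> (nat \<Rightarrow> 'w \<Rightarrow> 'm1) \<Rightarrow> (nat \<Rightarrow> 'w \<Rightarrow> bool)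
   \<Rightarrow> prim_label \<Rightarrow> 'w set set" where
  "prim_events M X0g X0l W0 W1 Mg Ml G l = (case l of
      LX0g \<Rightarrow> gen_sets M X0g borel
    | LX0l \<Rightarrow> gen_sets M X0l borel
    | LW0 t \<Rightarrow> gen_sets M (W0 t) borel
    | LW1 t \<Rightarrow> gen_sets M (W1 t) borel
    | LM0 t \<Rightarrow> gen_sets M (Mg t) (count_space UNIV)
    | LM1 t \<Rightarrow> gen_sets M (Ml t) (count_space UNIV)
    | LGam t \<Rightarrow> gen_sets M (G t) (count_space UNIV))"

end

theory Submission
  imports Defs
begin

(* The local mode M_t^1 is independent of the primitive variables X_0, W_{<t}, M_{<t}, Gamma_{<t},
   M_t^0, Gamma_t, and by feasibility X_t^1 and every generator of H_t^0 other than the channel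
   output for M_t^1 are functions of these primitives. If the packet arrives, M_t^1 is part of
   H_t^0; if it is dropped, H_t^0 says nothing about M_t^1. Hence
   P(M_t^1 in B | H_t^0) = 1{Gamma_t, M_t^1 in B} + P(M_t^1 in B) 1{not Gamma_t},
   and the same computation with the event X_t^1 in A included yields the product formula. *)

lemma stack_nth [simp]:
  "stack x y $ Inl a = x $ a" "stack x y $ Inr b = y $ b"
  by (simp_all add: stack_def)

lemma borel_measurable_vec_iff:
  fixes f :: "'a \<Rightarrow> real ^ 'n"
  shows "f \<in> borel_measurable N \<longleftrightarrow> (\<forall>i. (\<lambda>x. f x $ i) \<in> borel_measurable N)"
proof (intro iffI allI)
  fix i assume "f \<in> borel_measurable N"
  then show "(\<lambda>x. f x $ i) \<in> borel_measurable N"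
    using measurable_compose borel_measurable_nth by blast
next
  assume nth: "\<forall>i. (\<lambda>x. f x $ i) \<in> borel_measurable N"
  show "f \<in> borel_measurable N"
  proof (rule borel_measurable_euclidean_space[THEN iffD2], intro ballI)
    fix b :: "real ^ 'n" assume "b \<in> Basis"
    then obtain i where "b = axis i 1" unfolding Basis_vec_def by auto
    then have "(\<lambda>x. f x \<bullet> b) = (\<lambda>x. f x $ i)" by (simp add: inner_axis)
    then show "(\<lambda>x. f x \<bullet> b) \<in> borel_measurable N" using nth by simp
  qed
qed

lemma borel_measurable_stack_iff:
  fixes x :: "'a \<Rightarrow> real ^ 'n0" and y :: "'a \<Rightarrow> real ^ 'n1"
  shows "(\<lambda>\<omega>. stack (x \<omega>) (y \<omega>)) \<in> borel_measurable N
    \<longleftrightarrow> x \<in> borel_measurable N \<and> y \<in> borel_measurable N"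
proof -
  have "(\<forall>i. (\<lambda>\<omega>. stack (x \<omega>) (y \<omega>) $ i) \<in> borel_measurable N)
      \<longleftrightarrow> (\<forall>a. (\<lambda>\<omega>. x \<omega> $ a) \<in> borel_measurable N) \<and> (\<forall>b. (\<lambda>\<omega>. y \<omega> $ b) \<in> borel_measurable N)"
    by (simp only: split_sum_all stack_nth)
  then show ?thesis by (simp only: borel_measurable_vec_iff[of _ N])
qed

lemma borel_measurable_mode_matrix_mult:
  fixes a :: "'a \<Rightarrow> 'm0::countable" and b :: "'a \<Rightarrow> 'm1::countable"
    and A :: "'m0 \<Rightarrow> 'm1 \<Rightarrow> real ^ 'n ^ 'm"
  assumes "a \<in> measurable N (count_space UNIV)" "b \<in> measurable N (count_space UNIV)"
    and "x \<in> borel_measurable N"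
  shows "(\<lambda>\<omega>. A (a \<omega>) (b \<omega>) *v x \<omega>) \<in> borel_measurable N"
proof -
  have "(\<lambda>\<omega>. A i j *v x \<omega>) \<in> borel_measurable N" for i j
    using assms(3) by (rule borel_measurable_continuous_on[OF matrix_vector_mult_linear_continuous_on])
  then have "(\<lambda>\<omega>. A i (b \<omega>) *v x \<omega>) \<in> borel_measurable N" for i
    using assms(2) by (rule measurable_compose_countable)
  then show ?thesis
    using assms(1) by (rule measurable_compose_countable)
qed

lemma measurable_switched_linear_step:
  fixes mg :: "'a \<Rightarrow> 'm0::countable" and ml :: "'a \<Rightarrow> 'm1::countable"
    and xg xg' wg :: "'a \<Rightarrow> real ^ 'n0" and xl xl' wl :: "'a \<Rightarrow> real ^ 'n1"
    and ug :: "'a \<Rightarrow> real ^ 'k0" and ul :: "'a \<Rightarrow> real ^ 'k1"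
  assumes "mg \<in> measurable N (count_space UNIV)" "ml \<in> measurable N (count_space UNIV)"
    and "xg \<in> borel_measurable N" "xl \<in> borel_measurable N"
    and "ug \<in> borel_measurable N" "ul \<in> borel_measurable N"
    and "wg \<in> borel_measurable N" "wl \<in> borel_measurable N"
    and step: "\<And>\<omega>. \<omega> \<in> space N \<Longrightarrow> stack (xg' \<omega>) (xl' \<omega>) =
        A (mg \<omega>) (ml \<omega>) *v stack (xg \<omega>) (xl \<omega>) + B (mg \<omega>) (ml \<omega>) *v stack (ug \<omega>) (ul \<omega>)
        + stack (wg \<omega>) (wl \<omega>)"
  shows "xg' \<in> borel_measurable N \<and> xl' \<in> borel_measurable N"
proof -
  have "(\<lambda>\<omega>. A (mg \<omega>) (ml \<omega>) *v stack (xg \<omega>) (xl \<omega>) + B (mg \<omega>) (ml \<omega>) *v stack (ug \<omega>) (ul \<omega>)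
        + stack (wg \<omega>) (wl \<omega>)) \<in> borel_measurable N"
    using assms(3-8)
    by (intro borel_measurable_add borel_measurable_mode_matrix_mult[OF assms(1,2)])
      (simp_all only: borel_measurable_stack_iff)
  then have "(\<lambda>\<omega>. stack (xg' \<omega>) (xl' \<omega>)) \<in> borel_measurable N"
    by (rule measurable_cong[THEN iffD1, rotated]) (simp add: step)
  then show ?thesis by (simp add: borel_measurable_stack_iff)
qed

lemma measurable_chan:
  assumes G: "G \<in> measurable N (count_space UNIV)" and Y: "Y \<in> measurable N K"
  shows "chan G Y \<in> measurable N (option_measure K)"
  unfolding option_measure_def
proof (rule measurable_measure_of)
  have GT: "G -` {True} \<inter> space N \<in> sets N" using measurable_sets[OF G] by simp
  fix y assume "y \<in> insert {None} ((\<lambda>B. Some ` B) ` sets K)"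
  then consider "y = {None}" | B where "B \<in> sets K" "y = Some ` B" by blast
  then show "chan G Y -` y \<inter> space N \<in> sets N"
  proof cases
    case 1
    have "chan G Y -` y \<inter> space N = space N - (G -` {True} \<inter> space N)"
      unfolding 1 chan_def by (rule set_eqI) simp
    then show ?thesis using GT by (simp add: sets.Diff)
  next
    case 2
    have "chan G Y -` y \<inter> space N = (G -` {True} \<inter> space N) \<inter> (Y -` B \<inter> space N)"
      unfolding 2 chan_def by (rule set_eqI) (auto simp: inj_image_mem_iff)
    then show ?thesis using GT measurable_sets[OF Y 2(1)] by (simp add: sets.Int)
  qed
qed auto

lemma sets_option_measure:
  shows "{None} \<in> sets (option_measure K)"
    and "B \<in> sets K \<Longrightarrow> Some ` B \<in> sets (option_measure K)"
  unfolding option_measure_def by simp_all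

lemma sets_chan_received:
  assumes "chan G Y \<in> measurable K (option_measure N)" "B \<in> sets N"
  shows "{\<omega>\<in>space K. G \<omega> \<and> Y \<omega> \<in> B} \<in> sets K"
proof -
  have "chan G Y -` Some ` B \<inter> space K = {\<omega>\<in>space K. G \<omega> \<and> Y \<omega> \<in> B}"
    unfolding chan_def by (auto simp: inj_image_mem_iff split: if_splits)
  then show ?thesis using measurable_sets[OF assms(1) sets_option_measure(2)[OF assms(2)]] by simp
qed

lemma sets_chan_dropped:
  assumes "chan G Y \<in> measurable K (option_measure N)"
  shows "{\<omega>\<in>space K. \<not> G \<omega>} \<in> sets K"
proof -
  have "chan G Y -` {None} \<inter> space K = {\<omega>\<in>space K. \<not> G \<omega>}"
    unfolding chan_def by auto
  then show ?thesis using measurable_sets[OF assms(1) sets_option_measure(1)] by simp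
qed

lemma gen_sets_subset:
  "f \<in> measurable K N \<Longrightarrow> space K = space M \<Longrightarrow> gen_sets M f N \<subseteq> sets K"
  unfolding gen_sets_def by (auto dest: measurable_sets)

lemma gen_sets_Pow: "gen_sets M f N \<subseteq> Pow (space M)"
  unfolding gen_sets_def by blast

lemma Int_stable_gen_sets: "Int_stable (gen_sets M f N)"
  unfolding Int_stable_def
proof (intro ballI)
  fix a b assume "a \<in> gen_sets M f N" "b \<in> gen_sets M f N"
  then obtain A B where "A \<in> sets N" "a = f -` A \<inter> space M" "B \<in> sets N" "b = f -` B \<inter> space M"
    unfolding gen_sets_def by blast
  then have "A \<inter> B \<in> sets N" "a \<inter> b = f -` (A \<inter> B) \<inter> space M" by auto
  then show "a \<inter> b \<in> gen_sets M f N" unfolding gen_sets_def by blast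
qed

lemma measurable_if_gen_sets_subset:
  "gen_sets M f N \<subseteq> sets K \<Longrightarrow> space K = space M \<Longrightarrow> f \<in> space M \<rightarrow> space N \<Longrightarrow> f \<in> measurable K N"
  unfolding gen_sets_def measurable_def by auto

lemma space_common_info [simp]: "space (common_info M Xg Mg Xl Ml G Ug t) = space M"
  unfolding common_info_def by (rule space_measure_of) (auto simp: gen_sets_def)

lemma sets_common_info_subset:
  assumes K: "space K = space M"
    and "\<And>r. r \<le> t \<Longrightarrow> Xg r \<in> borel_measurable K"
    and "\<And>r. r \<le> t \<Longrightarrow> Mg r \<in> measurable K (count_space UNIV)"
    and "\<And>r. r \<le> t \<Longrightarrow> chan (G r) (Xl r) \<in> measurable K (option_measure borel)"
    and "\<And>r. r \<le> t \<Longrightarrow> chan (G r) (Ml r) \<in> measurable K (option_measure (count_space UNIV))"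
    and "\<And>r. r < t \<Longrightarrow> Ug r \<in> borel_measurable K"
  shows "sets (common_info M Xg Mg Xl Ml G Ug t) \<subseteq> sets K"
proof -
  have gens: "(\<Union>r\<in>{..t}. gen_sets M (Xg r) borel)
      \<union> (\<Union>r\<in>{..t}. gen_sets M (Mg r) (count_space UNIV))
      \<union> (\<Union>r\<in>{..t}. gen_sets M (chan (G r) (Xl r)) (option_measure borel))
      \<union> (\<Union>r\<in>{..t}. gen_sets M (chan (G r) (Ml r)) (option_measure (count_space UNIV)))
      \<union> (\<Union>r\<in>{..<t}. gen_sets M (Ug r) borel) \<subseteq> sets K"
    using assms(2-) by (intro Un_least UN_least gen_sets_subset[OF _ K]) auto
  moreover have "sets K \<subseteq> Pow (space M)" using K sets.sets_into_space by blast
  ultimately show ?thesis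
    unfolding common_info_def using sets.sigma_sets_subset[OF gens] K
    by (subst sets_measure_of) (blast, simp)
qed

lemma gen_sets_subset_common_info:
  assumes "r \<le> t"
  shows "gen_sets M (chan (G r) (Xl r)) (option_measure borel) \<subseteq> sets (common_info M Xg Mg Xl Ml G Ug t)"
    and "gen_sets M (chan (G r) (Ml r)) (option_measure (count_space UNIV))
      \<subseteq> sets (common_info M Xg Mg Xl Ml G Ug t)"
proof -
  show "gen_sets M (chan (G r) (Xl r)) (option_measure borel) \<subseteq> sets (common_info M Xg Mg Xl Ml G Ug t)"
    unfolding common_info_def
    by (intro subsetI in_measure_of Un_least UN_least gen_sets_Pow) (use assms in blast)
  show "gen_sets M (chan (G r) (Ml r)) (option_measure (count_space UNIV))
      \<subseteq> sets (common_info M Xg Mg Xl Ml G Ug t)"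
    unfolding common_info_def
    by (intro subsetI in_measure_of Un_least UN_least gen_sets_Pow) (use assms in blast)
qed

lemma measurable_common_info_chan:
  assumes "r \<le> t"
  shows "chan (G r) (Xl r) \<in> measurable (common_info M Xg Mg Xl Ml G Ug t) (option_measure borel)"
    and "chan (G r) (Ml r) \<in> measurable (common_info M Xg Mg Xl Ml G Ug t) (option_measure (count_space UNIV))"
  by (rule measurable_if_gen_sets_subset[OF gen_sets_subset_common_info(1)[OF assms]]
      measurable_if_gen_sets_subset[OF gen_sets_subset_common_info(2)[OF assms]];
      simp add: option_measure_def)+

(* Applied with N the event of a dropped packet, where the channel output is constant. *)
definition agree_on_sigma :: "'a measure \<Rightarrow> 'a set \<Rightarrow> 'a measure" where
  "agree_on_sigma G N = sigma (space G) {C. C \<subseteq> space G \<and> (\<exists>C'\<in>sets G. C \<inter> N = C' \<inter> N)}"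

lemma sigma_algebra_agree_on:
  "sigma_algebra (space G) {C. C \<subseteq> space G \<and> (\<exists>C'\<in>sets G. C \<inter> N = C' \<inter> N)}"
  unfolding sigma_algebra_iff2
proof (intro conjI ballI allI impI)
  show "{} \<in> {C. C \<subseteq> space G \<and> (\<exists>C'\<in>sets G. C \<inter> N = C' \<inter> N)}" by blast
next
  fix C assume "C \<in> {C. C \<subseteq> space G \<and> (\<exists>C'\<in>sets G. C \<inter> N = C' \<inter> N)}"
  then obtain C' where "C' \<in> sets G" "C \<inter> N = C' \<inter> N" by blast
  then have "space G - C' \<in> sets G" "(space G - C) \<inter> N = (space G - C') \<inter> N" by auto
  then show "space G - C \<in> {C. C \<subseteq> space G \<and> (\<exists>C'\<in>sets G. C \<inter> N = C' \<inter> N)}" by blast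
next
  fix A :: "nat \<Rightarrow> _" assume A: "range A \<subseteq> {C. C \<subseteq> space G \<and> (\<exists>C'\<in>sets G. C \<inter> N = C' \<inter> N)}"
  then have "\<forall>i. \<exists>C'. C' \<in> sets G \<and> A i \<inter> N = C' \<inter> N" by blast
  then obtain C' where "\<forall>i. C' i \<in> sets G \<and> A i \<inter> N = C' i \<inter> N"
    using choice[of "\<lambda>i C'. C' \<in> sets G \<and> A i \<inter> N = C' \<inter> N"] by blast
  then have "(\<Union>i. C' i) \<in> sets G" "(\<Union>i. A i) \<inter> N = (\<Union>i. C' i) \<inter> N"
    by (auto intro!: sets.countable_UN)
  moreover have "(\<Union>i. A i) \<subseteq> space G" using A by blast
  ultimately show "(\<Union>i. A i) \<in> {C. C \<subseteq> space G \<and> (\<exists>C'\<in>sets G. C \<inter> N = C' \<inter> N)}" by blast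
qed auto

lemma sets_agree_on_sigma:
  "sets (agree_on_sigma G N) = {C. C \<subseteq> space G \<and> (\<exists>C'\<in>sets G. C \<inter> N = C' \<inter> N)}"
  and space_agree_on_sigma [simp]: "space (agree_on_sigma G N) = space G"
  unfolding agree_on_sigma_def
  by (rule sigma_algebra.sets_measure_of_eq[OF sigma_algebra_agree_on]
      sigma_algebra.space_measure_of_eq[OF sigma_algebra_agree_on])+

lemma subalgebra_agree_on_sigma: "subalgebra (agree_on_sigma G N) G"
  unfolding subalgebra_def sets_agree_on_sigma space_agree_on_sigma
  using sets.sets_into_space by auto

lemma measurable_agree_on_sigma_const:
  assumes "\<And>x. x \<in> space G \<Longrightarrow> x \<in> N \<Longrightarrow> f x = c" and "f \<in> space G \<rightarrow> space K"
  shows "f \<in> measurable (agree_on_sigma G N) K"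
proof (rule measurableI)
  fix B
  have "(f -` B \<inter> space G) \<inter> N = (if c \<in> B then space G else {}) \<inter> N"
    using assms(1) by auto
  moreover have "(if c \<in> B then space G else {}) \<in> sets G" by simp
  ultimately show "f -` B \<inter> space (agree_on_sigma G N) \<in> sets (agree_on_sigma G N)"
    unfolding sets_agree_on_sigma space_agree_on_sigma by blast
qed (use assms(2) in auto)

lemma set_integral_indicator_eq_measure:
  assumes "C \<in> sets M" "E \<in> sets M"
  shows "(\<integral>x\<in>C. (indicator E x :: real) \<partial>M) = measure M (C \<inter> E)"
proof -
  have "(\<lambda>x. indicator C x *\<^sub>R (indicator E x :: real)) = indicator (C \<inter> E)"
    by (auto simp: indicator_def)
  then show ?thesis
    using assms sets.sets_into_space unfolding set_lebesgue_integral_def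
    by (simp add: Int_absorb2 sets.Int)
qed

context prob_space
begin

lemma sigma_finite_subalgebra_if_subalgebra: "subalgebra M F \<Longrightarrow> sigma_finite_subalgebra M F"
  using finite_measure_subalgebra_is_sigma_finite finite_measure_axioms
  unfolding finite_measure_subalgebra_def finite_measure_subalgebra_axioms_def by blast

(* On V - N the event V is F-measurable; on N it is independent of F with probability p. *)
lemma real_cond_exp_indicator_Int_split:
  assumes F: "subalgebra M F"
    and N: "N \<in> sets F" and VN: "V - N \<in> sets F"
    and V: "V \<in> events" and Z: "Z \<in> events"
    and off: "\<And>C. C \<in> sets F \<Longrightarrow> prob (C \<inter> N \<inter> Z \<inter> V) = p * prob (C \<inter> N \<inter> Z)"
  shows "AE x in M. real_cond_exp M F (indicator (Z \<inter> V)) x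
           = (indicator (V - N) x + p * indicator N x) * real_cond_exp M F (indicator Z) x"
proof -
  interpret sigma_finite_subalgebra M F by (rule sigma_finite_subalgebra_if_subalgebra[OF F])
  have FM: "C \<in> events" if "C \<in> sets F" for C
    using F that unfolding subalgebra_def by blast
  have ind_int: "integrable M (indicator E :: 'a \<Rightarrow> real)" if "E \<in> events" for E
    using that by (simp add: less_top[symmetric])
  define c where "c = real_cond_exp M F (indicator Z)"
  have c_int: "integrable M c" and c_F: "c \<in> borel_measurable F"
    unfolding c_def using ind_int[OF Z] by auto
  have int_c: "(\<integral>x\<in>C. c x \<partial>M) = prob (C \<inter> Z)" if "C \<in> sets F" for C
    using real_cond_exp_intA[OF ind_int[OF Z] that] set_integral_indicator_eq_measure[OF FM[OF that] Z]
    unfolding c_def by simp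
  show ?thesis
    unfolding c_def[symmetric]
  proof (rule real_cond_exp_charact)
    fix C assume C: "C \<in> sets F"
    have CVN: "C \<inter> (V - N) \<in> sets F" and CN: "C \<inter> N \<in> sets F"
      using C VN N by auto
    have "(\<integral>x\<in>C. (indicator (V - N) x + p * indicator N x) * c x \<partial>M)
        = (\<integral>x. indicator (C \<inter> (V - N)) x * c x + p * (indicator (C \<inter> N) x * c x) \<partial>M)"
      unfolding set_lebesgue_integral_def
      by (rule Bochner_Integration.integral_cong) (auto simp: indicator_def)
    also have "\<dots> = (\<integral>x\<in>C \<inter> (V - N). c x \<partial>M) + p * (\<integral>x\<in>C \<inter> N. c x \<partial>M)"
      using integrable_mult_indicator[OF FM[OF CVN] c_int] integrable_mult_indicator[OF FM[OF CN] c_int]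
      unfolding set_lebesgue_integral_def by simp
    also have "\<dots> = prob (C \<inter> (V - N) \<inter> Z) + p * prob (C \<inter> N \<inter> Z)"
      using int_c[OF CVN] int_c[OF CN] by simp
    also have "\<dots> = prob (C \<inter> (V - N) \<inter> Z) + prob (C \<inter> N \<inter> Z \<inter> V)"
      using off[OF C] by simp
    also have "\<dots> = prob (C \<inter> (Z \<inter> V))"
    proof -
      have "C \<inter> (Z \<inter> V) = (C \<inter> (V - N) \<inter> Z) \<union> (C \<inter> N \<inter> Z \<inter> V)" by blast
      moreover have "(C \<inter> (V - N) \<inter> Z) \<inter> (C \<inter> N \<inter> Z \<inter> V) = {}" by blast
      ultimately show ?thesis
        using FM[OF CVN] FM[OF CN] Z V by (simp add: finite_measure_Union sets.Int)
    qed
    also have "\<dots> = (\<integral>x\<in>C. indicator (Z \<inter> V) x \<partial>M)"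
      using set_integral_indicator_eq_measure[OF FM[OF C]] Z V by simp
    finally show "(\<integral>x\<in>C. indicator (Z \<inter> V) x \<partial>M)
        = (\<integral>x\<in>C. (indicator (V - N) x + p * indicator N x) * c x \<partial>M)" by simp
  next
    show "integrable M (indicator (Z \<inter> V) :: 'a \<Rightarrow> real)" using ind_int Z V by blast
    have "(\<lambda>x. (indicator (V - N) x + p * indicator N x) * c x)
        = (\<lambda>x. indicator (V - N) x * c x + p * (indicator N x * c x))"
      by (auto simp: indicator_def)
    then show "integrable M (\<lambda>x. (indicator (V - N) x + p * indicator N x) * c x)"
      using integrable_mult_indicator[OF FM[OF VN] c_int] integrable_mult_indicator[OF FM[OF N] c_int]
      by simp
    show "(\<lambda>x. (indicator (V - N) x + p * indicator N x) * c x) \<in> borel_measurable F"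
      using N VN c_F by measurable
  qed
qed

lemma real_cond_exp_indicator_Int_eq_mult:
  assumes F: "subalgebra M F" and G: "subalgebra M G"
    and N: "N \<in> sets F" "N \<in> sets G"
    and V: "V \<in> events" "V - N \<in> sets F" and X: "X \<in> sets G"
    and indep: "\<And>Y. Y \<in> sets G \<Longrightarrow> prob (Y \<inter> V) = prob Y * prob V"
    and agree: "\<And>C. C \<in> sets F \<Longrightarrow> \<exists>C'\<in>sets G. C \<inter> N = C' \<inter> N"
  shows "AE x in M. real_cond_exp M F (indicator (X \<inter> V)) x
           = real_cond_exp M F (indicator X) x * real_cond_exp M F (indicator V) x"
proof -
  interpret sigma_finite_subalgebra M F by (rule sigma_finite_subalgebra_if_subalgebra[OF F])
  have G_events: "sets G \<subseteq> events" using G unfolding subalgebra_def by blast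
  define g where "g x = indicator (V - N) x + prob V * indicator N x" for x
  have off: "prob (C \<inter> N \<inter> Z \<inter> V) = prob V * prob (C \<inter> N \<inter> Z)"
    if C: "C \<in> sets F" and Z: "Z \<in> sets G" for C Z
  proof -
    obtain C' where C': "C' \<in> sets G" "C \<inter> N = C' \<inter> N" using agree[OF C] by blast
    then have "C' \<inter> N \<inter> Z \<in> sets G" using N(2) Z by auto
    then show ?thesis using indep C'(2) by (simp add: mult.commute)
  qed
  have space_G: "space M \<in> sets G"
    using G sets.top[of G] unfolding subalgebra_def by simp
  have XV: "AE x in M. real_cond_exp M F (indicator (X \<inter> V)) x = g x * real_cond_exp M F (indicator X) x"
    unfolding g_def
    by (rule real_cond_exp_indicator_Int_split[OF F N(1) V(2) V(1)]) (use X G_events off in auto)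
  have "AE x in M. real_cond_exp M F (indicator (space M \<inter> V)) x
      = g x * real_cond_exp M F (indicator (space M)) x"
    unfolding g_def
    by (rule real_cond_exp_indicator_Int_split[OF F N(1) V(2) V(1)]) (use space_G off in auto)
  moreover have "AE x in M. real_cond_exp M F (indicator (space M)) x = indicator (space M) x"
    using F sets.top[of F] by (intro real_cond_exp_F_meas) (auto simp: subalgebra_def less_top[symmetric])
  ultimately have "AE x in M. real_cond_exp M F (indicator V) x = g x"
    using AE_space by eventually_elim (simp add: Int_absorb1 sets.sets_into_space[OF V(1)])
  with XV show ?thesis by eventually_elim simp
qed

end

definition past_labels :: "nat \<Rightarrow> prim_label set" where
  "past_labels s = {LX0g, LX0l} \<union> (\<Union>r<s. {LW0 r, LW1 r, LM0 r, LM1 r, LGam r})"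

lemma mem_past_labels [simp]:
  "LX0g \<in> past_labels s" "LX0l \<in> past_labels s"
  "LW0 r \<in> past_labels s \<longleftrightarrow> r < s" "LW1 r \<in> past_labels s \<longleftrightarrow> r < s"
  "LM0 r \<in> past_labels s \<longleftrightarrow> r < s" "LM1 r \<in> past_labels s \<longleftrightarrow> r < s"
  "LGam r \<in> past_labels s \<longleftrightarrow> r < s"
  unfolding past_labels_def by auto

lemma past_labels_mono: "r \<le> s \<Longrightarrow> past_labels r \<subseteq> past_labels s"
  unfolding past_labels_def by auto

locale feasible_prescription_system = prob_space M
  for M :: "'w measure" and T :: nat
    and A :: "'m0::finite \<Rightarrow> 'm1::finite \<Rightarrow> real ^ ('n0::finite + 'n1::finite) ^ ('n0 + 'n1)"
    and B :: "'m0 \<Rightarrow> 'm1 \<Rightarrow> real ^ ('k0::finite + 'k1::finite) ^ ('n0 + 'n1)"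
    and Xg :: "nat \<Rightarrow> 'w \<Rightarrow> real ^ 'n0" and Xl :: "nat \<Rightarrow> 'w \<Rightarrow> real ^ 'n1"
    and Mg :: "nat \<Rightarrow> 'w \<Rightarrow> 'm0" and Ml :: "nat \<Rightarrow> 'w \<Rightarrow> 'm1"
    and Wg :: "nat \<Rightarrow> 'w \<Rightarrow> real ^ 'n0" and Wl :: "nat \<Rightarrow> 'w \<Rightarrow> real ^ 'n1"
    and Gam :: "nat \<Rightarrow> 'w \<Rightarrow> bool"
    and Ug :: "nat \<Rightarrow> 'w \<Rightarrow> real ^ 'k0" and Ul :: "nat \<Rightarrow> 'w \<Rightarrow> real ^ 'k1"
    and rho :: "nat \<Rightarrow> 'w \<times> (real ^ 'n1) \<times> 'm1 \<Rightarrow> real ^ 'k1" +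
  assumes meas_X0g: "Xg 0 \<in> borel_measurable M" and meas_X0l: "Xl 0 \<in> borel_measurable M"
    and meas_W: "\<And>t. Wg t \<in> borel_measurable M" "\<And>t. Wl t \<in> borel_measurable M"
    and meas_M: "\<And>t. Mg t \<in> measurable M (count_space UNIV)"
                "\<And>t. Ml t \<in> measurable M (count_space UNIV)"
    and meas_G: "\<And>t. Gam t \<in> measurable M (count_space UNIV)"
    and indep: "prob_space.indep_sets M (prim_events M (Xg 0) (Xl 0) Wg Wl Mg Ml Gam) UNIV"
    and dyn: "\<And>t \<omega>. t \<le> T \<Longrightarrow> \<omega> \<in> space M \<Longrightarrow>
       stack (Xg (Suc t) \<omega>) (Xl (Suc t) \<omega>) =
         A (Mg t \<omega>) (Ml t \<omega>) *v stack (Xg t \<omega>) (Xl t \<omega>)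
         + B (Mg t \<omega>) (Ml t \<omega>) *v stack (Ug t \<omega>) (Ul t \<omega>)
         + stack (Wg t \<omega>) (Wl t \<omega>)"
    and meas_X: "\<And>t. Xg t \<in> borel_measurable M" "\<And>t. Xl t \<in> borel_measurable M"
    and meas_U: "\<And>t. Ug t \<in> borel_measurable M" "\<And>t. Ul t \<in> borel_measurable M"
    and strat_g: "\<And>t. t \<le> T \<Longrightarrow> Ug t \<in> borel_measurable (common_info M Xg Mg Xl Ml Gam Ug t)"
    and strat_l: "\<And>t. t \<le> T \<Longrightarrow> rho t \<in> borel_measurable
        (common_info M Xg Mg Xl Ml Gam Ug t \<Otimes>\<^sub>M (borel \<Otimes>\<^sub>M count_space UNIV))"
    and strat_l_eq: "\<And>t \<omega>. t \<le> T \<Longrightarrow> \<omega> \<in> space M \<Longrightarrow> Ul t \<omega> = rho t (\<omega>, Xl t \<omega>, Ml t \<omega>)"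
begin

abbreviation H0 :: "nat \<Rightarrow> 'w measure" where
  "H0 \<equiv> common_info M Xg Mg Xl Ml Gam Ug"

abbreviation prim :: "prim_label \<Rightarrow> 'w set set" where
  "prim \<equiv> prim_events M (Xg 0) (Xl 0) Wg Wl Mg Ml Gam"

definition prim_sigma :: "prim_label set \<Rightarrow> 'w measure" where
  "prim_sigma L = sigma (space M) (\<Union>l\<in>L. prim l)"

abbreviation past_sigma :: "nat \<Rightarrow> 'w measure" where
  "past_sigma s \<equiv> prim_sigma (past_labels s)"

(* Everything in H_t^0 except the channel output of the local mode is generated by these
   primitives, and M_t^1 is independent of them. *)
abbreviation pre_mode_sigma :: "nat \<Rightarrow> 'w measure" where
  "pre_mode_sigma t \<equiv> prim_sigma (insert (LM0 t) (insert (LGam t) (past_labels t)))"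

lemma prim_subset_events: "prim l \<subseteq> events"
  by (cases l) (simp_all add: prim_events_def gen_sets_subset meas_X0g meas_X0l meas_W meas_M meas_G)

lemma prim_Pow: "(\<Union>l\<in>L. prim l) \<subseteq> Pow (space M)"
  using prim_subset_events sets.sets_into_space by blast

lemma space_prim_sigma [simp]: "space (prim_sigma L) = space M"
  unfolding prim_sigma_def using prim_Pow by simp

lemma sets_prim_sigma: "sets (prim_sigma L) = sigma_sets (space M) (\<Union>l\<in>L. prim l)"
  unfolding prim_sigma_def using prim_Pow by simp

lemma subalgebra_prim_sigma: "subalgebra M (prim_sigma L)"
  unfolding subalgebra_def sets_prim_sigma
  using sets.sigma_sets_subset[of "\<Union>l\<in>L. prim l" M] prim_subset_events by auto

lemma prim_sigma_mono: "L \<subseteq> L' \<Longrightarrow> subalgebra (prim_sigma L') (prim_sigma L)"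
  unfolding subalgebra_def sets_prim_sigma by (simp add: sigma_sets_subseteq UN_mono)

lemma past_sigma_mono: "r \<le> s \<Longrightarrow> subalgebra (past_sigma s) (past_sigma r)"
  by (rule prim_sigma_mono[OF past_labels_mono])

lemma pre_mode_sigma_extends_past: "subalgebra (pre_mode_sigma t) (past_sigma t)"
  by (rule prim_sigma_mono) auto

lemma measurable_prim_sigma_generator:
  assumes "l \<in> L" "prim l = gen_sets M f N" "f \<in> space M \<rightarrow> space N"
  shows "f \<in> measurable (prim_sigma L) N"
proof (rule measurable_if_gen_sets_subset)
  show "gen_sets M f N \<subseteq> sets (prim_sigma L)"
    unfolding sets_prim_sigma using assms(1,2) by auto
qed (use assms(3) in simp_all)

lemma measurable_prim_sigma:
  shows "LX0g \<in> L \<Longrightarrow> Xg 0 \<in> borel_measurable (prim_sigma L)"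
    and "LX0l \<in> L \<Longrightarrow> Xl 0 \<in> borel_measurable (prim_sigma L)"
    and "LW0 r \<in> L \<Longrightarrow> Wg r \<in> borel_measurable (prim_sigma L)"
    and "LW1 r \<in> L \<Longrightarrow> Wl r \<in> borel_measurable (prim_sigma L)"
    and "LM0 r \<in> L \<Longrightarrow> Mg r \<in> measurable (prim_sigma L) (count_space UNIV)"
    and "LM1 r \<in> L \<Longrightarrow> Ml r \<in> measurable (prim_sigma L) (count_space UNIV)"
    and "LGam r \<in> L \<Longrightarrow> Gam r \<in> measurable (prim_sigma L) (count_space UNIV)"
  by (rule measurable_prim_sigma_generator, assumption, simp add: prim_events_def, simp)+

lemma subalgebra_common_info: "subalgebra M (H0 t)"
proof -
  have "sets (H0 t) \<subseteq> sets M"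
    by (rule sets_common_info_subset) (simp_all add: meas_X meas_M meas_U measurable_chan meas_G)
  then show ?thesis unfolding subalgebra_def by simp
qed

lemma common_info_subalgebra_past:
  assumes X: "\<And>r. r \<le> s \<Longrightarrow> Xg r \<in> borel_measurable (past_sigma s) \<and> Xl r \<in> borel_measurable (past_sigma s)"
    and U: "\<And>r. r < s \<Longrightarrow> Ug r \<in> borel_measurable (past_sigma s)"
  shows "subalgebra (past_sigma (Suc s)) (H0 s)"
proof -
  have sub: "subalgebra (past_sigma (Suc s)) (past_sigma s)" by (rule past_sigma_mono) simp
  have Gam: "Gam r \<in> measurable (past_sigma (Suc s)) (count_space UNIV)" if "r \<le> s" for r
    using that by (intro measurable_prim_sigma) simp
  have "sets (H0 s) \<subseteq> sets (past_sigma (Suc s))"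
  proof (rule sets_common_info_subset)
    show "Xg r \<in> borel_measurable (past_sigma (Suc s))" if "r \<le> s" for r
      by (rule measurable_from_subalg[OF sub]) (use X[OF that] in simp)
    show "Mg r \<in> measurable (past_sigma (Suc s)) (count_space UNIV)" if "r \<le> s" for r
      using that by (intro measurable_prim_sigma) simp
    show "chan (Gam r) (Xl r) \<in> measurable (past_sigma (Suc s)) (option_measure borel)" if "r \<le> s" for r
      by (rule measurable_chan[OF Gam[OF that] measurable_from_subalg[OF sub]]) (use X[OF that] in simp)
    show "chan (Gam r) (Ml r) \<in> measurable (past_sigma (Suc s)) (option_measure (count_space UNIV))"
      if "r \<le> s" for r
      using that by (intro measurable_chan Gam measurable_prim_sigma) simp_all
    show "Ug r \<in> borel_measurable (past_sigma (Suc s))" if "r < s" for r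
      using U[OF that] by (rule measurable_from_subalg[OF sub])
  qed simp
  then show ?thesis unfolding subalgebra_def by simp
qed

lemma actions_measurable_past:
  assumes s: "s \<le> T" and H: "subalgebra (past_sigma (Suc s)) (H0 s)"
    and X: "Xl s \<in> borel_measurable (past_sigma (Suc s))"
  shows "Ug s \<in> borel_measurable (past_sigma (Suc s)) \<and> Ul s \<in> borel_measurable (past_sigma (Suc s))"
proof
  show "Ug s \<in> borel_measurable (past_sigma (Suc s))"
    by (rule measurable_from_subalg[OF H strat_g[OF s]])
  have "(\<lambda>\<omega>. \<omega>) \<in> measurable (past_sigma (Suc s)) (H0 s)"
    using H unfolding subalgebra_def measurable_def by auto
  then have "(\<lambda>\<omega>. (\<omega>, Xl s \<omega>, Ml s \<omega>)) \<in> measurable (past_sigma (Suc s)) (H0 s \<Otimes>\<^sub>M (borel \<Otimes>\<^sub>M count_space UNIV))"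
    using X measurable_prim_sigma(6)[of s "past_labels (Suc s)"] by (intro measurable_Pair) simp_all
  then have "(\<lambda>\<omega>. rho s (\<omega>, Xl s \<omega>, Ml s \<omega>)) \<in> borel_measurable (past_sigma (Suc s))"
    using strat_l[OF s] by (rule measurable_compose)
  then show "Ul s \<in> borel_measurable (past_sigma (Suc s))"
    by (rule measurable_cong[THEN iffD1, rotated]) (simp add: strat_l_eq[OF s])
qed

lemma states_actions_measurable_past:
  "s \<le> Suc T \<Longrightarrow> (\<forall>r\<le>s. Xg r \<in> borel_measurable (past_sigma s) \<and> Xl r \<in> borel_measurable (past_sigma s))
     \<and> (\<forall>r<s. Ug r \<in> borel_measurable (past_sigma s))"
proof (induction s)
  case 0
  then show ?case by (simp add: measurable_prim_sigma)
next
  case (Suc s)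
  have s: "s \<le> T" using Suc.prems by simp
  have sub: "subalgebra (past_sigma (Suc s)) (past_sigma s)" by (rule past_sigma_mono) simp
  from Suc.IH s have X: "\<forall>r\<le>s. Xg r \<in> borel_measurable (past_sigma s) \<and> Xl r \<in> borel_measurable (past_sigma s)"
    and U: "\<forall>r<s. Ug r \<in> borel_measurable (past_sigma s)" by simp_all
  have H: "subalgebra (past_sigma (Suc s)) (H0 s)"
    using X U by (intro common_info_subalgebra_past) simp_all
  have Xs: "Xg s \<in> borel_measurable (past_sigma (Suc s))" "Xl s \<in> borel_measurable (past_sigma (Suc s))"
    using X[rule_format, OF order_refl] by (auto intro: measurable_from_subalg[OF sub])
  have Us: "Ug s \<in> borel_measurable (past_sigma (Suc s)) \<and> Ul s \<in> borel_measurable (past_sigma (Suc s))"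
    by (rule actions_measurable_past[OF s H Xs(2)])
  have modes: "Mg s \<in> measurable (past_sigma (Suc s)) (count_space UNIV)"
      "Ml s \<in> measurable (past_sigma (Suc s)) (count_space UNIV)"
    and noise: "Wg s \<in> borel_measurable (past_sigma (Suc s))" "Wl s \<in> borel_measurable (past_sigma (Suc s))"
    by (simp_all add: measurable_prim_sigma)
  have "Xg (Suc s) \<in> borel_measurable (past_sigma (Suc s)) \<and> Xl (Suc s) \<in> borel_measurable (past_sigma (Suc s))"
    by (rule measurable_switched_linear_step[where ug = "Ug s" and ul = "Ul s" and A = A and B = B,
          OF modes Xs _ _ noise]) (use Us dyn[OF s] in simp_all)
  then show ?case
    using X U Us by (auto simp: le_Suc_eq less_Suc_eq intro: measurable_from_subalg[OF sub])
qed

lemma common_info_agrees_with_pre_mode_on_drop: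
  assumes t: "t \<le> T" and C: "C \<in> sets (H0 t)"
  shows "\<exists>C'\<in>sets (pre_mode_sigma t).
    C \<inter> {\<omega>\<in>space M. \<not> Gam t \<omega>} = C' \<inter> {\<omega>\<in>space M. \<not> Gam t \<omega>}"
proof -
  let ?K = "agree_on_sigma (pre_mode_sigma t) {\<omega>\<in>space M. \<not> Gam t \<omega>}"
  have lift: "subalgebra ?K (pre_mode_sigma t)" by (rule subalgebra_agree_on_sigma)
  note sub = pre_mode_sigma_extends_past[of t]
  have past: "\<forall>r\<le>t. Xg r \<in> borel_measurable (past_sigma t) \<and> Xl r \<in> borel_measurable (past_sigma t)"
    "\<forall>r<t. Ug r \<in> borel_measurable (past_sigma t)"
    using states_actions_measurable_past[of t] t by simp_all
  have Gam: "Gam r \<in> measurable (pre_mode_sigma t) (count_space UNIV)" if "r \<le> t" for r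
    using that by (intro measurable_prim_sigma) auto
  have "sets (H0 t) \<subseteq> sets ?K"
  proof (rule sets_common_info_subset)
    show "Xg r \<in> borel_measurable ?K" if "r \<le> t" for r
      using past(1) that by (intro measurable_from_subalg[OF lift] measurable_from_subalg[OF sub]) simp
    show "Mg r \<in> measurable ?K (count_space UNIV)" if "r \<le> t" for r
      using that by (intro measurable_from_subalg[OF lift] measurable_prim_sigma) auto
    show "chan (Gam r) (Xl r) \<in> measurable ?K (option_measure borel)" if "r \<le> t" for r
      using past(1) that
      by (intro measurable_from_subalg[OF lift] measurable_chan Gam measurable_from_subalg[OF sub]) simp_all
    show "chan (Gam r) (Ml r) \<in> measurable ?K (option_measure (count_space UNIV))" if "r \<le> t" for r
    proof (cases "r = t")
      case True
      show ?thesis unfolding True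
        by (rule measurable_agree_on_sigma_const[where c = None]) (auto simp: chan_def option_measure_def)
    next
      case False
      with that show ?thesis
        by (intro measurable_from_subalg[OF lift] measurable_chan Gam measurable_prim_sigma) auto
    qed
    show "Ug r \<in> borel_measurable ?K" if "r < t" for r
      using past(2) that by (intro measurable_from_subalg[OF lift] measurable_from_subalg[OF sub]) simp
  qed simp
  then show ?thesis using C unfolding sets_agree_on_sigma by auto
qed

lemma indep_pre_mode_local_mode:
  "indep_set (sets (pre_mode_sigma t)) (sigma_sets (space M) (prim (LM1 t)))"
proof -
  define I where "I b = (if b then insert (LM0 t) (insert (LGam t) (past_labels t)) else {LM1 t})" for b
  have "indep_sets (\<lambda>b. sigma_sets (space M) (\<Union>l\<in>I b. prim l)) UNIV"
  proof (rule indep_sets_collect_sigma)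
    show "indep_sets prim (\<Union>b\<in>UNIV. I b)" by (rule indep_sets_mono_index[OF _ indep]) simp
    show "Int_stable (prim l)" for l
      by (cases l) (simp_all add: prim_events_def Int_stable_gen_sets)
    show "disjoint_family_on I UNIV"
      unfolding disjoint_family_on_def I_def by auto
  qed
  then show ?thesis
    unfolding indep_set_def sets_prim_sigma
    by (rule indep_sets_cong[THEN iffD1, OF refl, rotated]) (auto simp: I_def split: bool.split)
qed

lemma cond_indep_local_state_mode:
  assumes t: "t \<le> T"
  shows "cond_indep M (H0 t) (Xl t) borel (Ml t) (count_space UNIV)"
  unfolding cond_indep_def
proof (intro ballI)
  fix A :: "(real ^ 'n1) set" and Bs :: "'m1 set"
  assume A: "A \<in> sets borel"
  define N where "N = {\<omega>\<in>space M. \<not> Gam t \<omega>}"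
  define XA where "XA = {\<omega>\<in>space M. Xl t \<omega> \<in> A}"
  define MB where "MB = {\<omega>\<in>space M. Ml t \<omega> \<in> Bs}"
  have N_H: "N \<in> sets (H0 t)"
    unfolding N_def using sets_chan_dropped[OF measurable_common_info_chan(1)[OF order_refl]] by simp
  have "Gam t -` {False} \<inter> space (pre_mode_sigma t) \<in> sets (pre_mode_sigma t)"
    by (rule measurable_sets[OF measurable_prim_sigma(7)]) simp_all
  moreover have "Gam t -` {False} \<inter> space (pre_mode_sigma t) = N" unfolding N_def by auto
  ultimately have N_G: "N \<in> sets (pre_mode_sigma t)" by simp
  have MB: "MB \<in> events" unfolding MB_def using meas_M(2) by measurable
  have "MB - N = {\<omega>\<in>space M. Gam t \<omega> \<and> Ml t \<omega> \<in> Bs}" unfolding MB_def N_def by auto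
  then have MB_N: "MB - N \<in> sets (H0 t)"
    using sets_chan_received[OF measurable_common_info_chan(2)[OF order_refl]] by simp
  have "Xl t \<in> borel_measurable (pre_mode_sigma t)"
    using states_actions_measurable_past[of t] t
    by (auto intro: measurable_from_subalg[OF pre_mode_sigma_extends_past])
  then have "Xl t -` A \<inter> space (pre_mode_sigma t) \<in> sets (pre_mode_sigma t)"
    using A by (rule measurable_sets)
  moreover have "Xl t -` A \<inter> space (pre_mode_sigma t) = XA" unfolding XA_def by auto
  ultimately have XA: "XA \<in> sets (pre_mode_sigma t)" by simp
  have "MB \<in> sigma_sets (space M) (prim (LM1 t))"
    unfolding MB_def prim_events_def gen_sets_def by (rule sigma_sets.Basic) auto
  then have indep_MB: "prob (Y \<inter> MB) = prob Y * prob MB" if "Y \<in> sets (pre_mode_sigma t)" for Y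
    using indep_setD[OF indep_pre_mode_local_mode that] by simp
  have "AE \<omega> in M. real_cond_exp M (H0 t) (indicator (XA \<inter> MB)) \<omega>
      = real_cond_exp M (H0 t) (indicator XA) \<omega> * real_cond_exp M (H0 t) (indicator MB) \<omega>"
    using common_info_agrees_with_pre_mode_on_drop[OF t]
    by (intro real_cond_exp_indicator_Int_eq_mult[OF subalgebra_common_info subalgebra_prim_sigma
          N_H N_G MB MB_N XA indep_MB]) (simp_all add: N_def)
  moreover have "{\<omega>\<in>space M. Xl t \<omega> \<in> A \<and> Ml t \<omega> \<in> Bs} = XA \<inter> MB"
    unfolding XA_def MB_def by auto
  ultimately show "AE \<omega> in M. real_cond_exp M (H0 t) (indicator {\<omega>\<in>space M. Xl t \<omega> \<in> A \<and> Ml t \<omega> \<in> Bs}) \<omega>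
      = real_cond_exp M (H0 t) (indicator {\<omega>\<in>space M. Xl t \<omega> \<in> A}) \<omega>
        * real_cond_exp M (H0 t) (indicator {\<omega>\<in>space M. Ml t \<omega> \<in> Bs}) \<omega>"
    unfolding XA_def MB_def by simp
qed

end

theorem lemma3:
  fixes M :: "'w measure"
    and T :: nat
    and A :: "'m0::finite \<Rightarrow> 'm1::finite \<Rightarrow> real ^ ('n0::finite + 'n1::finite) ^ ('n0 + 'n1)"
    and B :: "'m0 \<Rightarrow> 'm1 \<Rightarrow> real ^ ('k0::finite + 'k1::finite) ^ ('n0 + 'n1)"
    and Xg :: "nat \<Rightarrow> 'w \<Rightarrow> real ^ 'n0" and Xl :: "nat \<Rightarrow> 'w \<Rightarrow> real ^ 'n1"
    and Mg :: "nat \<Rightarrow> 'w \<Rightarrow> 'm0" and Ml :: "nat \<Rightarrow> 'w \<Rightarrow> 'm1"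
    and Wg :: "nat \<Rightarrow> 'w \<Rightarrow> real ^ 'n0" and Wl :: "nat \<Rightarrow> 'w \<Rightarrow> real ^ 'n1"
    and Gam :: "nat \<Rightarrow> 'w \<Rightarrow> bool"
    and Ug :: "nat \<Rightarrow> 'w \<Rightarrow> real ^ 'k0" and Ul :: "nat \<Rightarrow> 'w \<Rightarrow> real ^ 'k1"
    and rho :: "nat \<Rightarrow> 'w \<times> (real ^ 'n1) \<times> 'm1 \<Rightarrow> real ^ 'k1"
  assumes P: "prob_space M"
    \<comment> \<open>primitive random variables and their measurability\<close>
    and meas_X0g: "Xg 0 \<in> borel_measurable M" and meas_X0l: "Xl 0 \<in> borel_measurable M"
    and meas_W: "\<And>t. Wg t \<in> borel_measurable M" "\<And>t. Wl t \<in> borel_measurable M"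
    and meas_M: "\<And>t. Mg t \<in> measurable M (count_space UNIV)"
                "\<And>t. Ml t \<in> measurable M (count_space UNIV)"
    and meas_G: "\<And>t. Gam t \<in> measurable M (count_space UNIV)"
    \<comment> \<open>mutual independence of X_0^n, W_t^n, M_t^n, Gamma_t\<close>
    and indep: "prob_space.indep_sets M (prim_events M (Xg 0) (Xl 0) Wg Wl Mg Ml Gam) UNIV"
    \<comment> \<open>Gamma_t identically (Bernoulli) distributed\<close>
    and ident: "\<exists>p. \<forall>t. measure M {\<omega>\<in>space M. Gam t \<omega>} = p"
    \<comment> \<open>switched linear dynamics, t = 0..T\<close>
    and dyn: "\<And>t \<omega>. t \<le> T \<Longrightarrow> \<omega> \<in> space M \<Longrightarrow>
       stack (Xg (Suc t) \<omega>) (Xl (Suc t) \<omega>) =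
         A (Mg t \<omega>) (Ml t \<omega>) *v stack (Xg t \<omega>) (Xl t \<omega>)
         + B (Mg t \<omega>) (Ml t \<omega>) *v stack (Ug t \<omega>) (Ul t \<omega>)
         + stack (Wg t \<omega>) (Wl t \<omega>)"
    \<comment> \<open>states and actions are random variables\<close>
    and meas_X: "\<And>t. Xg t \<in> borel_measurable M" "\<And>t. Xl t \<in> borel_measurable M"
    and meas_U: "\<And>t. Ug t \<in> borel_measurable M" "\<And>t. Ul t \<in> borel_measurable M"
    \<comment> \<open>prescription strategy: U_t^0 is a function of H_t^0\<close>
    and strat_g: "\<And>t. t \<le> T \<Longrightarrow> Ug t \<in> borel_measurable (common_info M Xg Mg Xl Ml Gam Ug t)"
    \<comment> \<open>prescription rho_t chosen as a function of H_t^0, U_t^1 = rho_t(X_t^1, M_t^1)\<close>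
    and strat_l: "\<And>t. t \<le> T \<Longrightarrow> rho t \<in> borel_measurable
        (common_info M Xg Mg Xl Ml Gam Ug t \<Otimes>\<^sub>M (borel \<Otimes>\<^sub>M count_space UNIV))"
    and strat_l_eq: "\<And>t \<omega>. t \<le> T \<Longrightarrow> \<omega> \<in> space M \<Longrightarrow> Ul t \<omega> = rho t (\<omega>, Xl t \<omega>, Ml t \<omega>)"
    \<comment> \<open>finite second moments of all states and actions\<close>
    and mom_X: "\<And>t. t \<le> Suc T \<Longrightarrow> integrable M (\<lambda>\<omega>. (norm (Xg t \<omega>))\<^sup>2)"
               "\<And>t. t \<le> Suc T \<Longrightarrow> integrable M (\<lambda>\<omega>. (norm (Xl t \<omega>))\<^sup>2)"
    and mom_U: "\<And>t. t \<le> T \<Longrightarrow> integrable M (\<lambda>\<omega>. (norm (Ug t \<omega>))\<^sup>2)"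
               "\<And>t. t \<le> T \<Longrightarrow> integrable M (\<lambda>\<omega>. (norm (Ul t \<omega>))\<^sup>2)"
    and t_le: "t \<le> T"
  shows "cond_indep M (common_info M Xg Mg Xl Ml Gam Ug t) (Xl t) borel (Ml t) (count_space UNIV)"
proof -
  interpret feasible_prescription_system M T A B Xg Xl Mg Ml Wg Wl Gam Ug Ul rho
    using P meas_X0g meas_X0l meas_W meas_M meas_G indep dyn meas_X meas_U strat_g strat_l strat_l_eq
    by (simp add: feasible_prescription_system_def feasible_prescription_system_axioms_def)
  show ?thesis by (rule cond_indep_local_state_mode[OF t_le])
qed

end
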